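(* Consider the system $\dot X=(1-Y)X$, $\dot Y=(X-U)Y$ on $\{X>0,Y>0\}$ and the function $$V(X,Y)=\Psi(1/X)+\Psi(Y/X).$$ Under the feedback $U=Y+\frac{Y-X}{Y}$, along closed-loop solutions $$\dot V=-\frac{(X-1)^2}{X}-\frac{(Y-X)^2}{XY},$$ which is negative definite on $\{X>0,Y>0\}$ with respect to $(1,1)$. Moreover, $V$ is positive definite with respect to $(1,1)$ and radially unbounded on the quadrant.
   Context: $\Psi(S)=S-1-\ln S$ for $S>0$. Radially unbounded on the quadrant means $V\to\infty$ as $(X,Y)$ approaches $\{X=0\}\cup\{Y=0\}$ or as $X+Y\to\infty$. *)

theory Defs
  imports Complex_Main
begin

definition Psi :: "real \<Rightarrow> real" where
  "Psi S = S - 1 - ln S"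

definition Vfun :: "real \<Rightarrow> real \<Rightarrow> real" where
  "Vfun X Y = Psi (1 / X) + Psi (Y / X)"

definition Ufb :: "real \<Rightarrow> real \<Rightarrow> real" where
  "Ufb X Y = Y + (Y - X) / Y"

definition Vdot :: "real \<Rightarrow> real \<Rightarrow> real" where
  "Vdot X Y = - ((X - 1)^2 / X) - (Y - X)^2 / (X * Y)"

end

theory Submission
  imports Defs
begin

text \<open>Both summands of V are values of \<open>Psi \<ge> 0\<close>, which vanishes only at 1, so V is positive
  definite; \<open>Psi s \<ge> \<bar>ln s\<bar> - 1\<close> makes V dominate \<open>\<bar>ln X\<bar>\<close> and \<open>\<bar>ln Y\<bar>\<close>, which gives radial
  unboundedness.\<close>

lemma Psi_1 [simp]: "Psi 1 = 0"
  by (simp add: Psi_def)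

lemma Psi_nonneg: "s > 0 \<Longrightarrow> Psi s \<ge> 0"
  using ln_le_minus_one[of s] by (simp add: Psi_def)

lemma Psi_pos: "s > 0 \<Longrightarrow> s \<noteq> 1 \<Longrightarrow> Psi s > 0"
  using ln_le_minus_one[of s] ln_eq_minus_one[of s] by (force simp: Psi_def)

lemma abs_ln_le_Psi:
  assumes "s > 0"
  shows "\<bar>ln s\<bar> \<le> Psi s + 1"
proof -
  have "ln s - ln 2 \<le> s / 2 - 1"
    using ln_le_minus_one[of "s / 2"] assms by (simp add: ln_div)
  then have "ln s \<le> Psi s + 1"
    using ln_2_less_1 by (simp add: Psi_def)
  moreover have "- ln s \<le> Psi s + 1"
    using assms by (simp add: Psi_def)
  ultimately show ?thesis
    by linarith
qed

lemma Vfun_1_1: "Vfun 1 1 = 0"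
  by (simp add: Vfun_def)

lemma Vfun_pos:
  assumes "X > 0" "Y > 0" "(X, Y) \<noteq> (1, 1)"
  shows "Vfun X Y > 0"
proof -
  have "Psi (1 / X) \<ge> 0" "Psi (Y / X) \<ge> 0"
    using assms Psi_nonneg by auto
  moreover have "Psi (1 / X) > 0 \<or> Psi (Y / X) > 0"
    using assms Psi_pos by (cases "X = 1") auto
  ultimately show ?thesis
    by (auto simp: Vfun_def)
qed

lemma abs_ln_le_Vfun:
  assumes X: "X > 0" and Y: "Y > 0"
  shows "\<bar>ln X\<bar> \<le> Vfun X Y + 1" and "\<bar>ln Y\<bar> \<le> Vfun X Y + 2"
proof -
  have "\<bar>ln X\<bar> \<le> Psi (1 / X) + 1" and "\<bar>ln Y - ln X\<bar> \<le> Psi (Y / X) + 1"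
    using abs_ln_le_Psi[of "1 / X"] abs_ln_le_Psi[of "Y / X"] X Y by (simp_all add: ln_div)
  then show "\<bar>ln X\<bar> \<le> Vfun X Y + 1" and "\<bar>ln Y\<bar> \<le> Vfun X Y + 2"
    using Psi_nonneg[of "Y / X"] X Y unfolding Vfun_def by auto
qed

lemma abs_ln_gt_if_far:
  fixes x c :: real
  assumes "x > 0" "x < exp (- c) \<or> x > exp c"
  shows "\<bar>ln x\<bar> > c"
proof -
  have "ln x < - c \<or> ln x > c"
    using assms ln_less_cancel_iff[of x "exp (- c)"] ln_less_cancel_iff[of "exp c" x] by auto
  then show ?thesis
    by linarith
qed

lemma Vfun_radially_unbounded:
  "\<exists>\<delta>>0. \<exists>R. \<forall>X Y. X > 0 \<longrightarrow> Y > 0 \<longrightarrow> (X < \<delta> \<or> Y < \<delta> \<or> X + Y > R) \<longrightarrow> Vfun X Y > M"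
proof (intro exI conjI allI impI)
  fix X Y :: real
  assume X: "X > 0" and Y: "Y > 0"
    and far: "X < exp (- (M + 2)) \<or> Y < exp (- (M + 2)) \<or> X + Y > 2 * exp (M + 2)"
  then have "\<bar>ln X\<bar> > M + 2 \<or> \<bar>ln Y\<bar> > M + 2"
    using abs_ln_gt_if_far[OF X, of "M + 2"] abs_ln_gt_if_far[OF Y, of "M + 2"] by linarith
  then show "Vfun X Y > M"
    using abs_ln_le_Vfun[OF X Y] by linarith
qed simp

lemma Vfun_has_real_derivative:
  fixes x y :: "real \<Rightarrow> real"
  assumes "x t > 0" "y t > 0"
    and "(x has_real_derivative x') (at t)" "(y has_real_derivative y') (at t)"
  shows "((\<lambda>s. Vfun (x s) (y s)) has_real_derivative
           (2 - (1 + y t) / x t) * x' / x t + (1 / x t - 1 / y t) * y') (at t)"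
  unfolding Vfun_def Psi_def
  apply (rule DERIV_cong)
   apply ((rule assms refl | rule derivative_eq_intros | use assms in simp)+)[1]
  using assms apply (simp add: field_simps)
  done

lemma closed_loop_Vdot:
  assumes "X > 0" "Y > 0"
  shows "(2 - (1 + Y) / X) * ((1 - Y) * X) / X + (1 / X - 1 / Y) * ((X - Ufb X Y) * Y) = Vdot X Y"
  using assms by (simp add: Vdot_def Ufb_def field_simps power2_eq_square)

lemma Vdot_1_1: "Vdot 1 1 = 0"
  by (simp add: Vdot_def)

lemma Vdot_neg:
  assumes "X > 0" "Y > 0" "(X, Y) \<noteq> (1, 1)"
  shows "Vdot X Y < 0"
proof -
  have "(X - 1)^2 / X \<ge> 0" "(Y - X)^2 / (X * Y) \<ge> 0"
    using assms by auto
  moreover have "(X - 1)^2 / X > 0 \<or> (Y - X)^2 / (X * Y) > 0"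
    using assms by (cases "X = 1") auto
  ultimately show ?thesis
    by (auto simp: Vdot_def)
qed

theorem mainTheorem5:
  shows
   "(\<forall>(x::real\<Rightarrow>real) (y::real\<Rightarrow>real) (t::real).
        x t > 0 \<longrightarrow> y t > 0 \<longrightarrow>
        (x has_real_derivative ((1 - y t) * x t)) (at t) \<longrightarrow>
        (y has_real_derivative ((x t - Ufb (x t) (y t)) * y t)) (at t) \<longrightarrow>
        ((\<lambda>s. Vfun (x s) (y s)) has_real_derivative Vdot (x t) (y t)) (at t))
    \<and> Vdot 1 1 = 0
    \<and> (\<forall>X Y::real. X > 0 \<longrightarrow> Y > 0 \<longrightarrow> (X, Y) \<noteq> (1, 1) \<longrightarrow> Vdot X Y < 0)
    \<and> Vfun 1 1 = 0
    \<and> (\<forall>X Y::real. X > 0 \<longrightarrow> Y > 0 \<longrightarrow> (X, Y) \<noteq> (1, 1) \<longrightarrow> Vfun X Y > 0)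
    \<and> (\<forall>M::real. \<exists>\<delta>>0. \<exists>R::real. \<forall>X Y::real. X > 0 \<longrightarrow> Y > 0 \<longrightarrow>
          (X < \<delta> \<or> Y < \<delta> \<or> X + Y > R) \<longrightarrow> Vfun X Y > M)"
proof (intro conjI allI impI)
  fix x y :: "real \<Rightarrow> real" and t :: real
  assume "x t > 0" "y t > 0"
    and "(x has_real_derivative ((1 - y t) * x t)) (at t)"
    and "(y has_real_derivative ((x t - Ufb (x t) (y t)) * y t)) (at t)"
  from Vfun_has_real_derivative[OF this] show
    "((\<lambda>s. Vfun (x s) (y s)) has_real_derivative Vdot (x t) (y t)) (at t)"
    unfolding closed_loop_Vdot[OF \<open>x t > 0\<close> \<open>y t > 0\<close>] .
qed (use Vdot_1_1 Vfun_1_1 Vdot_neg Vfun_pos Vfun_radially_unbounded in blast)+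

end
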